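(* Suppose that the natural action of $G$ on $\mathcal M(S_G(M))$ makes it a definable $G$-flow, and that $G$ is definably strongly amenable. Then $G$ is definably amenable.
   Context: $M$ is a first-order structure, $G$ a group definable in $M$, and all types in $S_G(M)$ are definable (for each $p$ and formula $\varphi(x,y)$, $\{m:\varphi(x,m)\in p\}$ is definable). $\mathcal M(S_G(M))$ is the space of Keisler measures (finitely additive probability measures on the Boolean algebra $B_G(M)$ of $M$-definable subsets of $G$), a closed subset of $[0,1]^{B_G(M)}$ with the product topology, with $G$ acting by $(g\mu)(X)=\mu(g^{-1}X)$. A map $f:G\to C$ to a compact Hausdorff space is definable if for any disjoint closed $C_1,C_2$ the preimages are separated by a definable subset of $G$. A $G$-flow (action by homeomorphisms on a compact Hausdorff space) is definable if each orbit map $g\mapsto gx$ is definable; minimal if no proper nonempty closed invariant subset; proximal if for all $x,y$ there is a net $(g_i)$ with $\lim g_ix=\lim g_iy$. $G$ is definably strongly amenable if every minimal definable proximal $G$-flow is a single point, and definably amenable if there is a $G$-invariant Keisler measure on $G$ over $M$. *)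

theory Defs
  imports "HOL-Analysis.Analysis" "HOL-Algebra.Group"
begin

text \<open>A first-order structure M (universe = type 'm) is presented by the
family S n of its definable (with parameters) subsets of M^n, where tuples are
lists of length n.  These are the axioms of a "structure on M" in the sense of
van den Dries, plus parameters (singletons definable).\<close>

definition fo_structure :: "(nat \<Rightarrow> 'm list set set) \<Rightarrow> bool" where
  "fo_structure S \<longleftrightarrow>
     (\<forall>n. S n \<subseteq> Pow {x. length x = n}) \<and>
     (\<forall>n. {x. length x = n} \<in> S n) \<and>
     (\<forall>n. \<forall>A\<in>S n. {x. length x = n} - A \<in> S n) \<and>
     (\<forall>n. \<forall>A\<in>S n. \<forall>B\<in>S n. A \<union> B \<in> S n) \<and>
     (\<forall>n. \<forall>A\<in>S n. {x @ [a] |x a. x \<in> A} \<in> S (Suc n)) \<and>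
     (\<forall>n. \<forall>A\<in>S n. {a # x |a x. x \<in> A} \<in> S (Suc n)) \<and>
     (\<forall>n\<ge>1. {x. length x = n \<and> x ! 0 = x ! (n - 1)} \<in> S n) \<and>
     (\<forall>n. \<forall>A\<in>S (Suc n). butlast ` A \<in> S n) \<and>
     (\<forall>a. {[a]} \<in> S 1)"

definition definable_group :: "(nat \<Rightarrow> 'm list set set) \<Rightarrow> nat \<Rightarrow> 'm list monoid \<Rightarrow> bool" where
  "definable_group S k G \<longleftrightarrow> group G \<and> carrier G \<in> S k \<and>
     {x @ y @ (x \<otimes>\<^bsub>G\<^esub> y) |x y. x \<in> carrier G \<and> y \<in> carrier G} \<in> S (3 * k)"

definition defsubG :: "(nat \<Rightarrow> 'm list set set) \<Rightarrow> nat \<Rightarrow> 'm list monoid \<Rightarrow> 'm list set set" where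
  "defsubG S k G = {A \<in> S k. A \<subseteq> carrier G}"

text \<open>S_G(M): complete types over M concentrating on G = ultrafilters of B_G(M).\<close>

definition typeG :: "(nat \<Rightarrow> 'm list set set) \<Rightarrow> nat \<Rightarrow> 'm list monoid \<Rightarrow> 'm list set set \<Rightarrow> bool" where
  "typeG S k G p \<longleftrightarrow> p \<subseteq> defsubG S k G \<and> carrier G \<in> p \<and> {} \<notin> p \<and>
     (\<forall>A\<in>p. \<forall>B\<in>p. A \<inter> B \<in> p) \<and>
     (\<forall>A\<in>p. \<forall>B\<in>defsubG S k G. A \<subseteq> B \<longrightarrow> B \<in> p) \<and>
     (\<forall>A\<in>defsubG S k G. A \<in> p \<or> carrier G - A \<in> p)"

definition definable_type :: "(nat \<Rightarrow> 'm list set set) \<Rightarrow> nat \<Rightarrow> 'm list monoid \<Rightarrow> 'm list set set \<Rightarrow> bool" where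
  "definable_type S k G p \<longleftrightarrow>
     (\<forall>n. \<forall>\<phi>\<in>S (k + n). {m. length m = n \<and> {x \<in> carrier G. x @ m \<in> \<phi>} \<in> p} \<in> S n)"

definition all_types_definable :: "(nat \<Rightarrow> 'm list set set) \<Rightarrow> nat \<Rightarrow> 'm list monoid \<Rightarrow> bool" where
  "all_types_definable S k G \<longleftrightarrow> (\<forall>p. typeG S k G p \<longrightarrow> definable_type S k G p)"

text \<open>A Keisler measure is a point of [0,1]^B_G(M) (a function on B_G(M), extended
by undefined outside it) which is a finitely additive probability measure.\<close>

definition keisler :: "(nat \<Rightarrow> 'm list set set) \<Rightarrow> nat \<Rightarrow> 'm list monoid \<Rightarrow> ('m list set \<Rightarrow> real) \<Rightarrow> bool" where
  "keisler S k G \<mu> \<longleftrightarrow> \<mu> \<in> extensional (defsubG S k G) \<and> \<mu> (carrier G) = 1 \<and>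
     (\<forall>A\<in>defsubG S k G. 0 \<le> \<mu> A) \<and>
     (\<forall>A\<in>defsubG S k G. \<forall>B\<in>defsubG S k G. A \<inter> B = {} \<longrightarrow> \<mu> (A \<union> B) = \<mu> A + \<mu> B)"

definition KM_top :: "(nat \<Rightarrow> 'm list set set) \<Rightarrow> nat \<Rightarrow> 'm list monoid \<Rightarrow> ('m list set \<Rightarrow> real) topology" where
  "KM_top S k G = subtopology (product_topology (\<lambda>_. top_of_set {0..1}) (defsubG S k G))
                              {\<mu>. keisler S k G \<mu>}"

definition KM_act :: "(nat \<Rightarrow> 'm list set set) \<Rightarrow> nat \<Rightarrow> 'm list monoid \<Rightarrow> 'm list \<Rightarrow> ('m list set \<Rightarrow> real) \<Rightarrow> ('m list set \<Rightarrow> real)" where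
  "KM_act S k G g \<mu> = (\<lambda>X. if X \<in> defsubG S k G then \<mu> ((\<lambda>x. inv\<^bsub>G\<^esub> g \<otimes>\<^bsub>G\<^esub> x) ` X) else undefined)"

definition G_flow :: "('g, 'b) monoid_scheme \<Rightarrow> 'x topology \<Rightarrow> ('g \<Rightarrow> 'x \<Rightarrow> 'x) \<Rightarrow> bool" where
  "G_flow G T act \<longleftrightarrow> compact_space T \<and> Hausdorff_space T \<and>
     (\<forall>g\<in>carrier G. continuous_map T T (act g)) \<and>
     (\<forall>x\<in>topspace T. act \<one>\<^bsub>G\<^esub> x = x) \<and>
     (\<forall>g\<in>carrier G. \<forall>h\<in>carrier G. \<forall>x\<in>topspace T. act (g \<otimes>\<^bsub>G\<^esub> h) x = act g (act h x))"

definition definable_map :: "(nat \<Rightarrow> 'm list set set) \<Rightarrow> nat \<Rightarrow> 'm list monoid \<Rightarrow> 'x topology \<Rightarrow> ('m list \<Rightarrow> 'x) \<Rightarrow> bool" where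
  "definable_map S k G T f \<longleftrightarrow>
     (\<forall>C1 C2. closedin T C1 \<and> closedin T C2 \<and> C1 \<inter> C2 = {} \<longrightarrow>
        (\<exists>D\<in>defsubG S k G. \<forall>g\<in>carrier G. (f g \<in> C1 \<longrightarrow> g \<in> D) \<and> (f g \<in> C2 \<longrightarrow> g \<notin> D)))"

definition definable_flow :: "(nat \<Rightarrow> 'm list set set) \<Rightarrow> nat \<Rightarrow> 'm list monoid \<Rightarrow> 'x topology \<Rightarrow> ('m list \<Rightarrow> 'x \<Rightarrow> 'x) \<Rightarrow> bool" where
  "definable_flow S k G T act \<longleftrightarrow> G_flow G T act \<and>
     (\<forall>x\<in>topspace T. definable_map S k G T (\<lambda>g. act g x))"

text \<open>Minimal flow (flows are nonempty by convention).\<close>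

definition minimal_flow :: "('g, 'b) monoid_scheme \<Rightarrow> 'x topology \<Rightarrow> ('g \<Rightarrow> 'x \<Rightarrow> 'x) \<Rightarrow> bool" where
  "minimal_flow G T act \<longleftrightarrow> topspace T \<noteq> {} \<and>
     (\<forall>Y. closedin T Y \<and> Y \<noteq> {} \<and> (\<forall>g\<in>carrier G. \<forall>y\<in>Y. act g y \<in> Y) \<longrightarrow> Y = topspace T)"

text \<open>Proximal flow; nets are expressed by (proper) filters on G.\<close>

definition proximal_flow :: "('g, 'b) monoid_scheme \<Rightarrow> 'x topology \<Rightarrow> ('g \<Rightarrow> 'x \<Rightarrow> 'x) \<Rightarrow> bool" where
  "proximal_flow G T act \<longleftrightarrow>
     (\<forall>x\<in>topspace T. \<forall>y\<in>topspace T. \<exists>F z. F \<noteq> bot \<and> eventually (\<lambda>g. g \<in> carrier G) F \<and>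
        limitin T (\<lambda>g. act g x) z F \<and> limitin T (\<lambda>g. act g y) z F)"

text \<open>Flows are quantified over spaces whose points
live in the type 'm list set set; this type is large enough to contain a copy of
every minimal definable flow (which is a continuous image of S_G(M), whose points
are elements of 'm list set set).\<close>

definition def_strongly_amenable :: "(nat \<Rightarrow> 'm list set set) \<Rightarrow> nat \<Rightarrow> 'm list monoid \<Rightarrow> bool" where
  "def_strongly_amenable S k G \<longleftrightarrow>
     (\<forall>(T :: 'm list set set topology) act.
        definable_flow S k G T act \<and> minimal_flow G T act \<and> proximal_flow G T act
        \<longrightarrow> (\<exists>a. topspace T = {a}))"

definition def_amenable :: "(nat \<Rightarrow> 'm list set set) \<Rightarrow> nat \<Rightarrow> 'm list monoid \<Rightarrow> bool" where
  "def_amenable S k G \<longleftrightarrow>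
     (\<exists>\<mu>. keisler S k G \<mu> \<and> (\<forall>g\<in>carrier G. KM_act S k G g \<mu> = \<mu>))"

end

theory Submission
  imports Defs
begin

text \<open>The proof follows the classical argument that strongly amenable groups are amenable.  By
compactness (Zorn's lemma for closed sets) there is a minimal nonempty closed convex
\<open>G\<close>-invariant set \<open>Q\<close> of Keisler measures, and inside it a minimal nonempty closed invariant
set \<open>X\<close>.  The subflow on \<open>X\<close> is minimal and definable; it is also proximal: for the
squared-norm energy of the values on finitely many definable sets, the set of points of
\<open>Q\<close> whose energies are bounded by the orbit supremum of a fixed \<open>m \<in> Q\<close> is closed, convex
and invariant, hence all of \<open>Q\<close>; applied to the midpoint of two points this forces their
translates to come arbitrarily close, and compactness turns this into a common limit.
Strong amenability (after coding measures by sets of definable sets, to reach the type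
over which it quantifies) makes \<open>X\<close> a single point, which is an invariant Keisler measure.\<close>

lemma eventually_INF_principal_directed:
  assumes "B \<noteq> {}"
    and dir: "\<And>a b. a \<in> B \<Longrightarrow> b \<in> B \<Longrightarrow> \<exists>c\<in>B. U c \<subseteq> U a \<inter> U b"
  shows "eventually P (INF b\<in>B. principal (U b)) \<longleftrightarrow> (\<exists>b\<in>B. \<forall>x\<in>U b. P x)"
proof -
  have "\<exists>c\<in>B. principal (U c) \<le> inf (principal (U a)) (principal (U b))"
    if "a \<in> B" "b \<in> B" for a b
    using dir[OF that] by (auto simp: inf_principal)
  then have "eventually P (INF b\<in>B. principal (U b)) \<longleftrightarrow> (\<exists>b\<in>B. eventually P (principal (U b)))"
    by (rule eventually_INF_base[OF assms(1)])
  then show ?thesis by (simp add: eventually_principal)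
qed

lemma INF_principal_directed_neq_bot:
  assumes "B \<noteq> {}"
    and "\<And>a b. a \<in> B \<Longrightarrow> b \<in> B \<Longrightarrow> \<exists>c\<in>B. U c \<subseteq> U a \<inter> U b"
    and "\<And>b. b \<in> B \<Longrightarrow> U b \<noteq> {}"
  shows "(INF b\<in>B. principal (U b)) \<noteq> bot"
  using eventually_INF_principal_directed[OF assms(1,2), of "\<lambda>_. False"] assms(3)
  by (auto simp: eventually_False[symmetric])

section \<open>Compactness: minimal closed sets and convergent refinements\<close>

text \<open>In a compact space a chain of nonempty closed sets has nonempty intersection
(the finite intersection property applied to a chain).\<close>

lemma compact_space_Inter_chain_nonempty:
  assumes cpt: "compact_space T" and chain: "subset.chain \<F> C"
    and closed: "\<And>F. F \<in> \<F> \<Longrightarrow> closedin T F \<and> F \<noteq> {}"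
  shows "\<Inter>C \<noteq> {}"
proof -
  have CF: "C \<subseteq> \<F>" and tot: "\<forall>X\<in>C. \<forall>Y\<in>C. X \<subseteq> Y \<or> Y \<subseteq> X"
    using chain unfolding subset_chain_def by simp_all
  have fip: "\<forall>C'. finite C' \<and> C' \<subseteq> C \<longrightarrow> \<Inter>C' \<noteq> {}"
  proof (intro allI impI)
    fix C' assume C': "finite C' \<and> C' \<subseteq> C"
    show "\<Inter>C' \<noteq> {}"
    proof (cases "C' = {}")
      case False
      have "subset.chain C C'"
        using C' tot unfolding subset_chain_def by (simp add: subset_iff)
      then have "\<Inter>C' \<in> C'" using Inter_in_chain C' False by blast
      then have "\<Inter>C' \<in> \<F>" using C' CF by (simp add: subset_iff)
      then show ?thesis using closed by simp
    qed simp
  qed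
  have "\<forall>F\<in>C. closedin T F" using CF closed by (simp add: subset_iff)
  then show ?thesis using fip compact_space_fip[THEN iffD1, OF cpt, rule_format] by simp
qed

text \<open>Zorn's lemma for compact spaces: a family of nonempty closed sets that is closed
under (nonempty) intersections of chains has a minimal element.\<close>

lemma compact_space_minimal_closed:
  assumes cpt: "compact_space T" and "F0 \<in> \<F>"
    and closed: "\<And>F. F \<in> \<F> \<Longrightarrow> closedin T F \<and> F \<noteq> {}"
    and Inter: "\<And>C. subset.chain \<F> C \<Longrightarrow> C \<noteq> {} \<Longrightarrow> \<Inter>C \<noteq> {} \<Longrightarrow> \<Inter>C \<in> \<F>"
  shows "\<exists>M\<in>\<F>. \<forall>F\<in>\<F>. F \<subseteq> M \<longrightarrow> F = M"
proof -
  let ?r = "relation_of (\<lambda>a b. b \<subseteq> a) \<F>"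
  have po: "partial_order_on \<F> ?r"
    by (rule partial_order_on_relation_ofI) (blast, blast, blast)
  have "\<exists>u\<in>\<F>. \<forall>a\<in>C. u \<subseteq> a" if "C \<in> Chains ?r" for C
  proof (cases "C = {}")
    case True
    then show ?thesis using \<open>F0 \<in> \<F>\<close> by blast
  next
    case False
    have tot: "\<forall>a\<in>C. \<forall>b\<in>C. (a, b) \<in> ?r \<or> (b, a) \<in> ?r" using that unfolding Chains_def by simp
    have "subset.chain \<F> C"
      using tot unfolding subset_chain_def relation_of_def by (auto simp: subset_iff)
    then have "\<Inter>C \<in> \<F>"
      using Inter False compact_space_Inter_chain_nonempty[OF cpt _ closed] by simp
    then show ?thesis by blast
  qed
  then show ?thesis using predicate_Zorn[OF po] by blast
qed

lemma compact_space_cluster_point: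
  assumes cpt: "compact_space T" and "F \<noteq> bot"
    and ev: "eventually (\<lambda>x. f x \<in> topspace T) F"
  shows "\<exists>z\<in>topspace T. \<forall>P. eventually P F \<longrightarrow> z \<in> T closure_of (f ` {x. P x})"
proof -
  define cl where "cl P = T closure_of (f ` {x. P x})" for P
  define \<U> where "\<U> = cl ` {P. eventually P F}"
  have fip: "\<forall>\<U>'. finite \<U>' \<and> \<U>' \<subseteq> \<U> \<longrightarrow> \<Inter>\<U>' \<noteq> {}"
  proof (intro allI impI)
    fix \<U>' assume \<U>': "finite \<U>' \<and> \<U>' \<subseteq> \<U>"
    then obtain Ps where Ps: "Ps \<subseteq> {P. eventually P F}" "finite Ps" "\<U>' = cl ` Ps"
      using finite_subset_image[of \<U>' cl "{P. eventually P F}"] unfolding \<U>_def by blast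
    have "eventually (\<lambda>x. \<forall>P\<in>Ps. P x) F"
      by (rule eventually_ball_finite[OF Ps(2)]) (use Ps(1) in auto)
    then have "eventually (\<lambda>x. (\<forall>P\<in>Ps. P x) \<and> f x \<in> topspace T) F"
      using ev by (rule eventually_conj)
    then obtain x where x: "\<forall>P\<in>Ps. P x" "f x \<in> topspace T"
      using eventually_happens'[OF \<open>F \<noteq> bot\<close>] by blast
    have "f x \<in> cl P" if "P \<in> Ps" for P
    proof -
      have "f x \<in> topspace T \<inter> f ` {x. P x}" using x that by auto
      then show ?thesis unfolding cl_def by (rule subsetD[OF closure_of_subset_Int])
    qed
    then have "f x \<in> \<Inter>\<U>'" unfolding Ps(3) by blast
    then show "\<Inter>\<U>' \<noteq> {}" by auto
  qed
  have "\<forall>C\<in>\<U>. closedin T C" unfolding \<U>_def cl_def by auto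
  then have "\<Inter>\<U> \<noteq> {}" using fip compact_space_fip[THEN iffD1, OF cpt, rule_format] by simp
  then obtain z where z: "z \<in> \<Inter>\<U>" by blast
  have zcl: "z \<in> cl P" if "eventually P F" for P
    by (rule InterD[OF z]) (use that in \<open>simp add: \<U>_def\<close>)
  have "z \<in> topspace T"
    using zcl[OF eventually_True] unfolding cl_def by (rule subsetD[OF closure_of_subset_topspace])
  then show ?thesis using zcl unfolding cl_def by blast
qed

text \<open>Conversely, a cluster point is a limit along a proper refinement of the filter: take
the filter generated by the sets \<open>{x. P x \<and> f x \<in> V}\<close> with \<open>P\<close> eventually true and \<open>V\<close> a
neighbourhood of the cluster point.\<close>

lemma cluster_point_limit_refinement:
  assumes z: "z \<in> topspace T"
    and cl: "\<And>P. eventually P F \<Longrightarrow> z \<in> T closure_of (f ` {x. P x})"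
  shows "\<exists>F'. F' \<noteq> bot \<and> F' \<le> F \<and> limitin T f z F'"
proof -
  define B where "B = {(P, V). eventually P F \<and> openin T V \<and> z \<in> V}"
  define U where "U = (\<lambda>(P, V). {x. P x \<and> f x \<in> V})"
  define F' where "F' = (INF b\<in>B. principal (U b))"
  have B_top: "(P, topspace T) \<in> B" if "eventually P F" for P
    using z that unfolding B_def by simp
  have B_nhd: "(\<lambda>_. True, V) \<in> B" if "openin T V" "z \<in> V" for V
    using that unfolding B_def by simp
  have Bne: "B \<noteq> {}" using B_top[OF eventually_True] by blast
  have dir: "\<exists>c\<in>B. U c \<subseteq> U a \<inter> U b" if "a \<in> B" "b \<in> B" for a b
  proof -
    obtain P1 V1 P2 V2 where ab: "a = (P1, V1)" "b = (P2, V2)" by fastforce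
    have "(\<lambda>x. P1 x \<and> P2 x, V1 \<inter> V2) \<in> B"
      using that unfolding ab B_def by (auto intro: eventually_conj)
    moreover have "U (\<lambda>x. P1 x \<and> P2 x, V1 \<inter> V2) \<subseteq> U a \<inter> U b"
      unfolding ab U_def by auto
    ultimately show ?thesis by blast
  qed
  have ev: "eventually Q F' \<longleftrightarrow> (\<exists>b\<in>B. \<forall>x\<in>U b. Q x)" for Q
    unfolding F'_def by (rule eventually_INF_principal_directed[OF Bne dir])
  have ne: "U b \<noteq> {}" if "b \<in> B" for b
  proof -
    obtain P V where b: "b = (P, V)" by fastforce
    then have "eventually P F" "openin T V" "z \<in> V" using that unfolding B_def by simp_all
    then obtain y where "y \<in> f ` {x. P x}" "y \<in> V"
      using cl[of P] unfolding in_closure_of by blast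
    then show ?thesis unfolding b U_def by auto
  qed
  have "F' \<noteq> bot" unfolding F'_def by (rule INF_principal_directed_neq_bot[OF Bne dir ne])
  moreover have "F' \<le> F"
  proof (rule filter_leI)
    fix Q assume "eventually Q F"
    then have "\<forall>x\<in>U (Q, topspace T). Q x" unfolding U_def by simp
    then show "eventually Q F'" unfolding ev using B_top[OF \<open>eventually Q F\<close>] by blast
  qed
  moreover have "limitin T f z F'"
    unfolding limitin_def
  proof (intro conjI allI impI z)
    fix V assume V: "openin T V \<and> z \<in> V"
    have "\<forall>x\<in>U (\<lambda>_. True, V). f x \<in> V" unfolding U_def by simp
    then show "eventually (\<lambda>x. f x \<in> V) F'" unfolding ev using B_nhd V by blast
  qed
  ultimately show ?thesis by blast
qed

lemma compact_space_convergent_refinement: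
  assumes "compact_space T" and "F \<noteq> bot" and "eventually (\<lambda>x. f x \<in> topspace T) F"
  shows "\<exists>F' z. F' \<noteq> bot \<and> F' \<le> F \<and> limitin T f z F'"
proof -
  obtain z where z: "z \<in> topspace T"
    and cl: "\<And>P. eventually P F \<Longrightarrow> z \<in> T closure_of (f ` {x. P x})"
    using compact_space_cluster_point[OF assms] by blast
  show ?thesis using cluster_point_limit_refinement[OF z cl] by blast
qed

section \<open>Subflows and isomorphic copies of flows\<close>

definition proximal_pair :: "('g, 'b) monoid_scheme \<Rightarrow> 'x topology \<Rightarrow> ('g \<Rightarrow> 'x \<Rightarrow> 'x) \<Rightarrow> 'x \<Rightarrow> 'x \<Rightarrow> bool"
  where "proximal_pair G T act x y \<longleftrightarrow> (\<exists>F z. F \<noteq> bot \<and> eventually (\<lambda>g. g \<in> carrier G) F \<and>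
           limitin T (\<lambda>g. act g x) z F \<and> limitin T (\<lambda>g. act g y) z F)"

lemma proximal_flow_iff:
  "proximal_flow G T act \<longleftrightarrow> (\<forall>x\<in>topspace T. \<forall>y\<in>topspace T. proximal_pair G T act x y)"
  unfolding proximal_flow_def proximal_pair_def ..

definition invariant_set :: "('g, 'b) monoid_scheme \<Rightarrow> ('g \<Rightarrow> 'x \<Rightarrow> 'x) \<Rightarrow> 'x set \<Rightarrow> bool"
  where "invariant_set G act X \<longleftrightarrow> (\<forall>g\<in>carrier G. \<forall>x\<in>X. act g x \<in> X)"

lemma invariant_set_Inter: "(\<And>X. X \<in> C \<Longrightarrow> invariant_set G act X) \<Longrightarrow> invariant_set G act (\<Inter>C)"
  unfolding invariant_set_def by blast

text \<open>A closed invariant subset of a definable flow is again a definable flow: the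
separating definable sets for closed subsets of \<open>X\<close> are those for the ambient flow.\<close>

lemma definable_flow_subtopology:
  assumes df: "definable_flow S k G T act" and X: "closedin T X" "invariant_set G act X"
  shows "definable_flow S k G (subtopology T X) act"
proof -
  have GF: "G_flow G T act" and dm: "\<And>x. x \<in> topspace T \<Longrightarrow> definable_map S k G T (\<lambda>g. act g x)"
    using df unfolding definable_flow_def by auto
  have XT: "X \<subseteq> topspace T" using X(1) closedin_subset by metis
  then have topX: "topspace (subtopology T X) = X" by (rule topspace_subtopology_subset)
  have actX: "act g x \<in> X" if "g \<in> carrier G" "x \<in> X" for g x
    using X(2) that unfolding invariant_set_def by blast
  have "G_flow G (subtopology T X) act"
    unfolding G_flow_def topX
  proof (intro conjI ballI)
    have "compact_space T" using GF unfolding G_flow_def by blast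
    then show "compact_space (subtopology T X)"
      by (rule compact_space_subtopology[OF closedin_compact_space[OF _ X(1)]])
    have "Hausdorff_space T" using GF unfolding G_flow_def by blast
    then show "Hausdorff_space (subtopology T X)" by (rule Hausdorff_space_subtopology)
    fix g assume g: "g \<in> carrier G"
    then have "continuous_map T T (act g)" using GF unfolding G_flow_def by blast
    then have "continuous_map (subtopology T X) T (act g)" by (rule continuous_map_from_subtopology)
    then show "continuous_map (subtopology T X) (subtopology T X) (act g)"
      unfolding continuous_map_in_subtopology topX using g actX by blast
  next
    fix x assume "x \<in> X" then show "act \<one>\<^bsub>G\<^esub> x = x"
      using GF XT unfolding G_flow_def by blast
  next
    fix g h x assume "g \<in> carrier G" "h \<in> carrier G" "x \<in> X"
    then show "act (g \<otimes>\<^bsub>G\<^esub> h) x = act g (act h x)" using GF XT unfolding G_flow_def by blast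
  qed
  moreover have "definable_map S k G (subtopology T X) (\<lambda>g. act g x)" if x: "x \<in> X" for x
    unfolding definable_map_def
  proof (intro allI impI)
    fix C1 C2 assume C: "closedin (subtopology T X) C1 \<and> closedin (subtopology T X) C2 \<and> C1 \<inter> C2 = {}"
    then have "closedin T C1" "closedin T C2" using closedin_trans_full[OF _ X(1)] by blast+
    with C dm[OF subsetD[OF XT x]]
    show "\<exists>D\<in>defsubG S k G. \<forall>g\<in>carrier G. (act g x \<in> C1 \<longrightarrow> g \<in> D) \<and> (act g x \<in> C2 \<longrightarrow> g \<notin> D)"
      unfolding definable_map_def by blast
  qed
  ultimately show ?thesis unfolding definable_flow_def topX by blast
qed

lemma minimal_flow_subtopology:
  assumes X: "closedin T X" "X \<noteq> {}"
    and min: "\<And>Y. closedin T Y \<Longrightarrow> Y \<noteq> {} \<Longrightarrow> Y \<subseteq> X \<Longrightarrow> invariant_set G act Y \<Longrightarrow> Y = X"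
  shows "minimal_flow G (subtopology T X) act"
proof -
  have topX: "topspace (subtopology T X) = X"
    using X(1) closedin_subset topspace_subtopology_subset by metis
  show ?thesis
    unfolding minimal_flow_def topX
  proof (intro conjI allI impI X(2))
    fix Y assume Y: "closedin (subtopology T X) Y \<and> Y \<noteq> {} \<and> (\<forall>g\<in>carrier G. \<forall>y\<in>Y. act g y \<in> Y)"
    then have "closedin T Y" using closedin_trans_full[OF _ X(1)] by blast
    moreover have "Y \<subseteq> X" using Y closedin_subset[of "subtopology T X" Y] topX by blast
    ultimately show "Y = X" using min Y unfolding invariant_set_def by blast
  qed
qed

text \<open>Proximality of two points of a closed invariant set may be tested in the ambient flow,
because limits of orbits staying in \<open>X\<close> lie in \<open>X\<close>.\<close>

lemma proximal_flow_subtopology: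
  assumes X: "closedin T X" "invariant_set G act X"
    and prox: "\<And>x y. x \<in> X \<Longrightarrow> y \<in> X \<Longrightarrow> proximal_pair G T act x y"
  shows "proximal_flow G (subtopology T X) act"
proof -
  have topX: "topspace (subtopology T X) = X"
    using X(1) closedin_subset topspace_subtopology_subset by metis
  show ?thesis
    unfolding proximal_flow_iff topX
  proof (intro ballI)
    fix x y assume xy: "x \<in> X" "y \<in> X"
    then obtain F z where Fz: "F \<noteq> bot" "eventually (\<lambda>g. g \<in> carrier G) F"
      "limitin T (\<lambda>g. act g x) z F" "limitin T (\<lambda>g. act g y) z F"
      using prox unfolding proximal_pair_def by blast
    have ex: "eventually (\<lambda>g. act g x \<in> X) F" and ey: "eventually (\<lambda>g. act g y \<in> X) F"
      using Fz(2) by (rule eventually_mono, use X(2) xy in \<open>simp add: invariant_set_def\<close>)+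
    have "z \<in> X" using limitin_closedin[OF Fz(3) X(1) ex] Fz(1) by simp
    then show "proximal_pair G (subtopology T X) act x y"
      unfolding proximal_pair_def limitin_subtopology using Fz ex ey by blast
  qed
qed

lemma definable_flow_conjugate:
  assumes hm: "homeomorphic_maps T T' e r" and df: "definable_flow S k G T act"
  shows "definable_flow S k G T' (\<lambda>g y. e (act g (r y)))"
proof -
  have ce: "continuous_map T T' e" and cr: "continuous_map T' T r"
    and re: "\<And>x. x \<in> topspace T \<Longrightarrow> r (e x) = x" and er: "\<And>y. y \<in> topspace T' \<Longrightarrow> e (r y) = y"
    using hm unfolding homeomorphic_maps_def by auto
  have rT: "r y \<in> topspace T" if "y \<in> topspace T'" for y
    using cr that continuous_map_image_subset_topspace by blast
  have hs: "T homeomorphic_space T'" using hm unfolding homeomorphic_space_def by blast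
  have GF: "G_flow G T act" and dm: "\<forall>x\<in>topspace T. definable_map S k G T (\<lambda>g. act g x)"
    using df unfolding definable_flow_def by auto
  have actc: "continuous_map T T (act g)" if "g \<in> carrier G" for g
    using GF that unfolding G_flow_def by auto
  have actT: "act g x \<in> topspace T" if "g \<in> carrier G" "x \<in> topspace T" for g x
    using continuous_map_image_subset_topspace[OF actc[OF that(1)]] that(2) by blast
  have "G_flow G T' (\<lambda>g y. e (act g (r y)))"
    unfolding G_flow_def
  proof (intro conjI ballI)
    show "compact_space T'" using GF hs homeomorphic_compact_space unfolding G_flow_def by blast
    show "Hausdorff_space T'" using GF hs homeomorphic_Hausdorff_space unfolding G_flow_def by blast
    fix g assume "g \<in> carrier G"
    then have "continuous_map T' T' (e \<circ> act g \<circ> r)"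
      using cr ce actc by (intro continuous_map_compose) auto
    then show "continuous_map T' T' (\<lambda>y. e (act g (r y)))" by (simp add: o_def)
  next
    fix y assume "y \<in> topspace T'"
    then show "e (act \<one>\<^bsub>G\<^esub> (r y)) = y" using GF rT er unfolding G_flow_def by auto
  next
    fix g h y assume "g \<in> carrier G" "h \<in> carrier G" "y \<in> topspace T'"
    then show "e (act (g \<otimes>\<^bsub>G\<^esub> h) (r y)) = e (act g (r (e (act h (r y)))))"
      using GF rT re actT unfolding G_flow_def by auto
  qed
  moreover have "definable_map S k G T' (\<lambda>g. e (act g (r y)))" if y: "y \<in> topspace T'" for y
    unfolding definable_map_def
  proof (intro allI impI)
    fix C1 C2 assume C: "closedin T' C1 \<and> closedin T' C2 \<and> C1 \<inter> C2 = {}"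
    let ?C1 = "{x \<in> topspace T. e x \<in> C1}" and ?C2 = "{x \<in> topspace T. e x \<in> C2}"
    have "closedin T ?C1" "closedin T ?C2" "?C1 \<inter> ?C2 = {}"
      using C closedin_continuous_map_preimage[OF ce] by auto
    then obtain D where "D \<in> defsubG S k G"
      "\<forall>g\<in>carrier G. (act g (r y) \<in> ?C1 \<longrightarrow> g \<in> D) \<and> (act g (r y) \<in> ?C2 \<longrightarrow> g \<notin> D)"
      using dm rT[OF y] unfolding definable_map_def by blast
    then show "\<exists>D\<in>defsubG S k G. \<forall>g\<in>carrier G.
        (e (act g (r y)) \<in> C1 \<longrightarrow> g \<in> D) \<and> (e (act g (r y)) \<in> C2 \<longrightarrow> g \<notin> D)"
      using actT rT[OF y] by auto
  qed
  ultimately show ?thesis unfolding definable_flow_def by blast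
qed

lemma minimal_flow_conjugate:
  assumes hm: "homeomorphic_maps T T' e r" and mf: "minimal_flow G T act"
    and actT: "\<And>g x. g \<in> carrier G \<Longrightarrow> x \<in> topspace T \<Longrightarrow> act g x \<in> topspace T"
  shows "minimal_flow G T' (\<lambda>g y. e (act g (r y)))"
proof -
  have ce: "continuous_map T T' e" and cr: "continuous_map T' T r"
    and re: "\<And>x. x \<in> topspace T \<Longrightarrow> r (e x) = x" and er: "\<And>y. y \<in> topspace T' \<Longrightarrow> e (r y) = y"
    using hm unfolding homeomorphic_maps_def by auto
  have rT: "r y \<in> topspace T" if "y \<in> topspace T'" for y
    using cr that continuous_map_image_subset_topspace by blast
  show ?thesis
    unfolding minimal_flow_def
  proof (intro conjI allI impI)
    show "topspace T' \<noteq> {}"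
      using mf continuous_map_image_subset_topspace[OF ce] unfolding minimal_flow_def by blast
    fix Y assume Y: "closedin T' Y \<and> Y \<noteq> {} \<and> (\<forall>g\<in>carrier G. \<forall>y\<in>Y. e (act g (r y)) \<in> Y)"
    let ?Y = "{x \<in> topspace T. e x \<in> Y}"
    have YT: "Y \<subseteq> topspace T'" using Y closedin_subset by metis
    have "closedin T ?Y" using Y closedin_continuous_map_preimage[OF ce] by auto
    moreover have "?Y \<noteq> {}" using Y YT rT er by fastforce
    moreover have "act g x \<in> ?Y" if "g \<in> carrier G" "x \<in> ?Y" for g x
      using Y that re actT by fastforce
    ultimately have Yall: "?Y = topspace T" using mf unfolding minimal_flow_def by blast
    show "Y = topspace T'"
    proof
      show "topspace T' \<subseteq> Y"
      proof
        fix y assume y: "y \<in> topspace T'"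
        have "r y \<in> ?Y" unfolding Yall using rT[OF y] .
        then show "y \<in> Y" using er[OF y] by simp
      qed
    qed (rule YT)
  qed
qed

lemma proximal_flow_conjugate:
  assumes hm: "homeomorphic_maps T T' e r" and pf: "proximal_flow G T act"
  shows "proximal_flow G T' (\<lambda>g y. e (act g (r y)))"
  unfolding proximal_flow_iff
proof (intro ballI)
  have ce: "continuous_map T T' e" and cr: "continuous_map T' T r"
    using hm unfolding homeomorphic_maps_def by auto
  fix y1 y2 assume "y1 \<in> topspace T'" "y2 \<in> topspace T'"
  then have "r y1 \<in> topspace T" "r y2 \<in> topspace T"
    using cr continuous_map_image_subset_topspace by blast+
  then obtain F z where "F \<noteq> bot" "eventually (\<lambda>g. g \<in> carrier G) F"
      "limitin T (\<lambda>g. act g (r y1)) z F" "limitin T (\<lambda>g. act g (r y2)) z F"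
    using pf unfolding proximal_flow_iff proximal_pair_def by blast
  then show "proximal_pair G T' (\<lambda>g y. e (act g (r y))) y1 y2"
    unfolding proximal_pair_def using continuous_map_limit[OF ce] by (fastforce simp: o_def)
qed

lemma inj_on_homeomorphic_copy:
  fixes e :: "'x \<Rightarrow> 'y"
  assumes inj: "inj_on e (topspace T)"
  shows "\<exists>(T' :: 'y topology) r. homeomorphic_maps T T' e r \<and> topspace T' = e ` topspace T"
proof -
  define r where "r = inv_into (topspace T) e"
  define T' where "T' = pullback_topology (e ` topspace T) r T"
  have re: "r (e x) = x" if "x \<in> topspace T" for x using inj that unfolding r_def by auto
  have rT: "r y \<in> topspace T" if "y \<in> e ` topspace T" for y
    using that unfolding r_def by (auto simp: inv_into_into)
  have top': "topspace T' = e ` topspace T"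
    unfolding T'_def topspace_pullback_topology using rT by auto
  have "continuous_map T' T r"
    using continuous_map_pullback[OF continuous_map_id] unfolding T'_def by simp
  moreover have "continuous_map T T' e"
    unfolding T'_def
    by (rule continuous_map_pullback') (auto intro: continuous_map_eq[OF continuous_map_id] simp: re)
  ultimately have "homeomorphic_maps T T' e r"
    unfolding homeomorphic_maps_def top' using re unfolding r_def by (auto simp: f_inv_into_f)
  then show ?thesis using top' by blast
qed

lemma minimal_proximal_flow_copy:
  fixes e :: "'x \<Rightarrow> 'y" and act :: "'m list \<Rightarrow> 'x \<Rightarrow> 'x"
  assumes inj: "inj_on e (topspace T)" and df: "definable_flow S k G T act"
    and mf: "minimal_flow G T act" and pf: "proximal_flow G T act"
  shows "\<exists>(T' :: 'y topology) act'. definable_flow S k G T' act' \<and> minimal_flow G T' act' \<and>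
           proximal_flow G T' act' \<and> topspace T' = e ` topspace T"
proof -
  obtain T' :: "'y topology" and r where hm: "homeomorphic_maps T T' e r"
    and top': "topspace T' = e ` topspace T"
    using inj_on_homeomorphic_copy[OF inj] by blast
  have "act g x \<in> topspace T" if "g \<in> carrier G" "x \<in> topspace T" for g x
    using df that continuous_map_image_subset_topspace
    unfolding definable_flow_def G_flow_def by blast
  then show ?thesis
    using definable_flow_conjugate[OF hm df] minimal_flow_conjugate[OF hm mf]
      proximal_flow_conjugate[OF hm pf] top' by blast
qed

lemma square_convex_combination:
  fixes t a b :: real
  assumes "0 \<le> t" "t \<le> 1"
  shows "(t * a + (1 - t) * b)\<^sup>2 \<le> t * a\<^sup>2 + (1 - t) * b\<^sup>2"
proof -
  have "t * a\<^sup>2 + (1 - t) * b\<^sup>2 - (t * a + (1 - t) * b)\<^sup>2 = t * (1 - t) * (a - b)\<^sup>2"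
    by (simp add: power2_eq_square algebra_simps)
  moreover have "0 \<le> t * (1 - t) * (a - b)\<^sup>2" using assms by simp
  ultimately show ?thesis by linarith
qed

lemma sum_square_half_difference:
  fixes a b :: "'i \<Rightarrow> real"
  shows "(\<Sum>X\<in>L. ((a X - b X) / 2)\<^sup>2) =
         ((\<Sum>X\<in>L. (a X)\<^sup>2) + (\<Sum>X\<in>L. (b X)\<^sup>2)) / 2 - (\<Sum>X\<in>L. ((a X + b X) / 2)\<^sup>2)"
proof -
  have pointwise: "((a X - b X) / 2)\<^sup>2 = ((a X)\<^sup>2 + (b X)\<^sup>2) / 2 - ((a X + b X) / 2)\<^sup>2" for X
    by (simp add: power2_eq_square field_simps)
  have "(\<Sum>X\<in>L. ((a X)\<^sup>2 + (b X)\<^sup>2) / 2) = ((\<Sum>X\<in>L. (a X)\<^sup>2) + (\<Sum>X\<in>L. (b X)\<^sup>2)) / 2"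
    by (simp add: sum_divide_distrib[symmetric] sum.distrib)
  then show ?thesis unfolding pointwise sum_subtractf by simp
qed

section \<open>The flow of Keisler measures\<close>

locale keisler_flow =
  fixes S :: "nat \<Rightarrow> 'm list set set" and k :: nat and G :: "'m list monoid"
  assumes fo: "fo_structure S" and dg: "definable_group S k G"
    and df: "definable_flow S k G (KM_top S k G) (KM_act S k G)"
begin

abbreviation "T \<equiv> KM_top S k G"
abbreviation "act \<equiv> KM_act S k G"
abbreviation "D \<equiv> defsubG S k G"

lemma group_G: "group G"
  using dg unfolding definable_group_def by auto

lemma one_closed: "\<one>\<^bsub>G\<^esub> \<in> carrier G"
  using group_G by (simp add: group.is_monoid monoid.one_closed)

lemma mult_closed: "g \<in> carrier G \<Longrightarrow> h \<in> carrier G \<Longrightarrow> g \<otimes>\<^bsub>G\<^esub> h \<in> carrier G"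
  using group_G by (simp add: group.is_monoid monoid.m_closed)

lemma carrier_D: "carrier G \<in> D"
  using dg unfolding definable_group_def defsubG_def by auto

lemma D_Un: "A \<in> D \<Longrightarrow> B \<in> D \<Longrightarrow> A \<union> B \<in> D"
  using fo unfolding fo_structure_def defsubG_def by auto

lemma topspace_T: "topspace T = {\<mu>. keisler S k G \<mu>} \<inter> (\<Pi>\<^sub>E X\<in>D. {0..1})"
  unfolding KM_top_def by auto

lemma T_undefined: "\<mu> \<in> topspace T \<Longrightarrow> X \<notin> D \<Longrightarrow> \<mu> X = undefined"
  unfolding topspace_T by (auto simp: PiE_def extensional_def)

lemma T_range: "\<mu> \<in> topspace T \<Longrightarrow> X \<in> D \<Longrightarrow> 0 \<le> \<mu> X \<and> \<mu> X \<le> 1"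
  unfolding topspace_T by (auto simp: PiE_def Pi_def)

lemma T_keisler: "\<mu> \<in> topspace T \<Longrightarrow> keisler S k G \<mu>"
  unfolding topspace_T by auto

lemma G_flow_T: "G_flow G T act"
  using df unfolding definable_flow_def by auto

lemma compact_T: "compact_space T"
  using G_flow_T unfolding G_flow_def by auto

lemma act_continuous: "g \<in> carrier G \<Longrightarrow> continuous_map T T (act g)"
  using G_flow_T unfolding G_flow_def by auto

lemma act_T: "g \<in> carrier G \<Longrightarrow> \<mu> \<in> topspace T \<Longrightarrow> act g \<mu> \<in> topspace T"
  using continuous_map_image_subset_topspace[OF act_continuous] by blast

lemma act_one: "\<mu> \<in> topspace T \<Longrightarrow> act \<one>\<^bsub>G\<^esub> \<mu> = \<mu>"
  using G_flow_T unfolding G_flow_def by auto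

lemma act_mult:
  "g \<in> carrier G \<Longrightarrow> h \<in> carrier G \<Longrightarrow> \<mu> \<in> topspace T \<Longrightarrow> act (g \<otimes>\<^bsub>G\<^esub> h) \<mu> = act g (act h \<mu>)"
  using G_flow_T unfolding G_flow_def by auto

lemma evaluation_continuous:
  assumes "X \<in> D"
  shows "continuous_map T euclideanreal (\<lambda>\<mu>. \<mu> X)"
proof -
  have "continuous_map (product_topology (\<lambda>_. top_of_set {0..1::real}) D) euclideanreal (\<lambda>\<mu>. \<mu> X)"
    using continuous_map_product_projection[OF assms] by (rule continuous_map_into_fulltopology)
  then show ?thesis unfolding KM_top_def by (rule continuous_map_from_subtopology)
qed

text \<open>The Dirac measure at the identity shows that the space is nonempty.\<close>

lemma topspace_T_nonempty: "topspace T \<noteq> {}"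
proof -
  define \<delta> where "\<delta> = (\<lambda>A. if A \<in> D then (if \<one>\<^bsub>G\<^esub> \<in> A then 1 else 0) else undefined :: real)"
  have "keisler S k G \<delta>"
    unfolding keisler_def
  proof (intro conjI ballI impI)
    show "\<delta> \<in> extensional D" unfolding \<delta>_def extensional_def by auto
    show "\<delta> (carrier G) = 1" unfolding \<delta>_def using carrier_D one_closed by auto
    fix A assume "A \<in> D" then show "0 \<le> \<delta> A" unfolding \<delta>_def by auto
  next
    fix A B assume "A \<in> D" "B \<in> D" "A \<inter> B = {}"
    then show "\<delta> (A \<union> B) = \<delta> A + \<delta> B" unfolding \<delta>_def using D_Un by auto
  qed
  moreover have "\<delta> \<in> (\<Pi>\<^sub>E X\<in>D. {0..1})" unfolding \<delta>_def by (auto simp: PiE_def extensional_def)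
  ultimately show ?thesis unfolding topspace_T by auto
qed

definition mix :: "real \<Rightarrow> ('m list set \<Rightarrow> real) \<Rightarrow> ('m list set \<Rightarrow> real) \<Rightarrow> ('m list set \<Rightarrow> real)"
  where "mix t a b = (\<lambda>X. t * a X + (1 - t) * b X)"

definition convex_set :: "('m list set \<Rightarrow> real) set \<Rightarrow> bool"
  where "convex_set C \<longleftrightarrow> (\<forall>a\<in>C. \<forall>b\<in>C. \<forall>t. 0 \<le> t \<and> t \<le> 1 \<longrightarrow> mix t a b \<in> C)"

lemma mix_same: "mix t a b X = a X" if "a X = b X"
  using that unfolding mix_def by (simp add: algebra_simps)

lemma mix_T:
  assumes a: "a \<in> topspace T" and b: "b \<in> topspace T" and t: "0 \<le> t" "t \<le> 1"
  shows "mix t a b \<in> topspace T"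
proof -
  have ka: "keisler S k G a" and kb: "keisler S k G b" using a b T_keisler by auto
  have undef: "mix t a b X = undefined" if "X \<notin> D" for X
    using mix_same[of a X b t] T_undefined[OF a that] T_undefined[OF b that] by simp
  have range: "0 \<le> mix t a b X \<and> mix t a b X \<le> 1" if "X \<in> D" for X
  proof -
    have "t * a X \<le> t" "(1 - t) * b X \<le> 1 - t"
      using T_range[OF a that] T_range[OF b that] t by (simp_all add: mult_left_le)
    then show ?thesis using T_range[OF a that] T_range[OF b that] t unfolding mix_def by simp
  qed
  have "keisler S k G (mix t a b)"
    unfolding keisler_def
  proof (intro conjI ballI impI)
    show "mix t a b \<in> extensional D" using undef by (auto simp: extensional_def)
    show "mix t a b (carrier G) = 1" using ka kb unfolding keisler_def mix_def by simp
    fix A assume "A \<in> D" then show "0 \<le> mix t a b A" using range by blast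
  next
    fix A B assume "A \<in> D" "B \<in> D" "A \<inter> B = {}"
    then have "a (A \<union> B) = a A + a B" "b (A \<union> B) = b A + b B" using ka kb unfolding keisler_def by auto
    then show "mix t a b (A \<union> B) = mix t a b A + mix t a b B" unfolding mix_def by (simp add: algebra_simps)
  qed
  moreover have "mix t a b \<in> (\<Pi>\<^sub>E X\<in>D. {0..1})"
    using undef range by (auto simp: PiE_def extensional_def Pi_def)
  ultimately show ?thesis unfolding topspace_T by auto
qed

lemma act_mix:
  assumes "a \<in> topspace T" "b \<in> topspace T"
  shows "act g (mix t a b) = mix t (act g a) (act g b)"
proof
  fix X show "act g (mix t a b) X = mix t (act g a) (act g b) X"
    unfolding KM_act_def by (cases "X \<in> D") (simp_all add: mix_def algebra_simps)
qed

lemma convex_set_Inter: "(\<And>X. X \<in> C \<Longrightarrow> convex_set X) \<Longrightarrow> convex_set (\<Inter>C)"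
  unfolding convex_set_def by blast

definition minimal_convex_invariant :: "('m list set \<Rightarrow> real) set \<Rightarrow> bool"
  where "minimal_convex_invariant Q \<longleftrightarrow>
     closedin T Q \<and> Q \<noteq> {} \<and> convex_set Q \<and> invariant_set G act Q \<and>
     (\<forall>C. closedin T C \<and> C \<noteq> {} \<and> convex_set C \<and> invariant_set G act C \<and> C \<subseteq> Q \<longrightarrow> C = Q)"

lemma minimal_convex_invariantD:
  assumes "minimal_convex_invariant Q"
  shows "closedin T Q" "Q \<noteq> {}" "convex_set Q" "invariant_set G act Q" "Q \<subseteq> topspace T"
    and "\<And>C. closedin T C \<Longrightarrow> C \<noteq> {} \<Longrightarrow> convex_set C \<Longrightarrow> invariant_set G act C \<Longrightarrow> C \<subseteq> Q \<Longrightarrow> C = Q"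
  using assms closedin_subset unfolding minimal_convex_invariant_def by blast+

lemma minimal_convex_invariant_exists: "\<exists>Q. minimal_convex_invariant Q"
proof -
  define \<F> where "\<F> = {C. closedin T C \<and> C \<noteq> {} \<and> convex_set C \<and> invariant_set G act C}"
  have closed: "closedin T C \<and> C \<noteq> {}" if "C \<in> \<F>" for C using that unfolding \<F>_def by simp
  have "convex_set (topspace T)" unfolding convex_set_def using mix_T by blast
  moreover have "invariant_set G act (topspace T)" unfolding invariant_set_def using act_T by blast
  ultimately have top: "topspace T \<in> \<F>" unfolding \<F>_def using topspace_T_nonempty by simp
  have Inter: "\<Inter>C \<in> \<F>" if "subset.chain \<F> C" "C \<noteq> {}" "\<Inter>C \<noteq> {}" for C
  proof -
    have CF: "C \<subseteq> \<F>" using that(1) unfolding subset_chain_def by simp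
    have "closedin T (\<Inter>C)" using CF closed that(2) by (intro closedin_Inter) auto
    moreover have "convex_set (\<Inter>C)" using CF unfolding \<F>_def by (intro convex_set_Inter) auto
    moreover have "invariant_set G act (\<Inter>C)" using CF unfolding \<F>_def by (intro invariant_set_Inter) auto
    ultimately show ?thesis unfolding \<F>_def using that(3) by simp
  qed
  obtain Q where Q: "Q \<in> \<F>" and min: "\<forall>C\<in>\<F>. C \<subseteq> Q \<longrightarrow> C = Q"
    using compact_space_minimal_closed[OF compact_T top closed Inter] by blast
  show ?thesis unfolding minimal_convex_invariant_def
  proof (intro exI[of _ Q] conjI allI impI)
    show "closedin T Q" "Q \<noteq> {}" "convex_set Q" "invariant_set G act Q"
      using Q unfolding \<F>_def by simp_all
    fix C assume "closedin T C \<and> C \<noteq> {} \<and> convex_set C \<and> invariant_set G act C \<and> C \<subseteq> Q"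
    then show "C = Q" using min unfolding \<F>_def by simp
  qed
qed

lemma minimal_invariant_subset_exists:
  assumes "closedin T Q" "Q \<noteq> {}" "invariant_set G act Q"
  shows "\<exists>X. closedin T X \<and> X \<noteq> {} \<and> X \<subseteq> Q \<and> invariant_set G act X \<and>
     (\<forall>Y. closedin T Y \<and> Y \<noteq> {} \<and> Y \<subseteq> X \<and> invariant_set G act Y \<longrightarrow> Y = X)"
proof -
  define \<F> where "\<F> = {C. closedin T C \<and> C \<noteq> {} \<and> C \<subseteq> Q \<and> invariant_set G act C}"
  have closed: "closedin T C \<and> C \<noteq> {}" if "C \<in> \<F>" for C using that unfolding \<F>_def by simp
  have Q: "Q \<in> \<F>" unfolding \<F>_def using assms by simp
  have Inter: "\<Inter>C \<in> \<F>" if "subset.chain \<F> C" "C \<noteq> {}" "\<Inter>C \<noteq> {}" for C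
  proof -
    have CF: "C \<subseteq> \<F>" using that(1) unfolding subset_chain_def by simp
    obtain X where X: "X \<in> C" using \<open>C \<noteq> {}\<close> by blast
    then have "X \<subseteq> Q" using CF unfolding \<F>_def by auto
    then have "\<Inter>C \<subseteq> Q" by (rule order_trans[OF Inter_lower[OF X]])
    moreover have "closedin T (\<Inter>C)" using CF closed that(2) by (intro closedin_Inter) auto
    moreover have "invariant_set G act (\<Inter>C)" using CF unfolding \<F>_def by (intro invariant_set_Inter) auto
    ultimately show ?thesis unfolding \<F>_def using that(3) by simp
  qed
  obtain X where X: "X \<in> \<F>" and min: "\<forall>C\<in>\<F>. C \<subseteq> X \<longrightarrow> C = X"
    using compact_space_minimal_closed[OF compact_T Q closed Inter] by blast
  show ?thesis
  proof (intro exI[of _ X] conjI allI impI)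
    show "closedin T X" "X \<noteq> {}" "X \<subseteq> Q" "invariant_set G act X"
      using X unfolding \<F>_def by simp_all
    fix Y assume "closedin T Y \<and> Y \<noteq> {} \<and> Y \<subseteq> X \<and> invariant_set G act Y"
    moreover then have "Y \<subseteq> Q" using \<open>X \<subseteq> Q\<close> by blast
    ultimately show "Y = X" using min unfolding \<F>_def by simp
  qed
qed
subsection \<open>Strong proximality of minimal convex invariant sets\<close>

definition admissible :: "'m list set set \<Rightarrow> 'm list \<Rightarrow> bool"
  where "admissible L h \<longleftrightarrow> finite L \<and> L \<subseteq> D \<and> h \<in> carrier G"

definition energy :: "'m list set set \<Rightarrow> 'm list \<Rightarrow> ('m list set \<Rightarrow> real) \<Rightarrow> real"
  where "energy L h q = (\<Sum>X\<in>L. (act h q X)\<^sup>2)"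

lemma energy_continuous:
  assumes "admissible L h"
  shows "continuous_map T euclideanreal (energy L h)"
proof -
  have "continuous_map T euclideanreal (\<lambda>q. act h q X)" if "X \<in> L" for X
    using continuous_map_compose[OF act_continuous evaluation_continuous] that assms
    unfolding admissible_def by (auto simp: o_def)
  then have "continuous_map T euclideanreal (\<lambda>q. \<Sum>X\<in>L. act h q X * act h q X)"
    using assms unfolding admissible_def
    by (intro continuous_map_sum continuous_map_real_mult) auto
  then show ?thesis unfolding energy_def by (simp add: power2_eq_square)
qed

lemma energy_bounded:
  assumes "admissible L h" "q \<in> topspace T"
  shows "energy L h q \<le> real (card L)"
proof -
  have "(act h q X)\<^sup>2 \<le> 1" if "X \<in> L" for X
  proof -
    have "0 \<le> act h q X \<and> act h q X \<le> 1"
      using T_range[OF act_T] assms that unfolding admissible_def by blast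
    then show ?thesis by (intro power_le_one) auto
  qed
  then have "energy L h q \<le> real (card L) * 1"
    unfolding energy_def by (rule sum_bounded_above)
  then show ?thesis by simp
qed

lemma energy_act:
  "h \<in> carrier G \<Longrightarrow> g \<in> carrier G \<Longrightarrow> q \<in> topspace T \<Longrightarrow> energy L h (act g q) = energy L (h \<otimes>\<^bsub>G\<^esub> g) q"
  unfolding energy_def by (simp add: act_mult)

lemma energy_one: "q \<in> topspace T \<Longrightarrow> energy L \<one>\<^bsub>G\<^esub> q = (\<Sum>X\<in>L. (q X)\<^sup>2)"
  unfolding energy_def by (simp add: act_one)

lemma energy_mix:
  assumes "a \<in> topspace T" "b \<in> topspace T" "0 \<le> t" "t \<le> 1"
  shows "energy L h (mix t a b) \<le> t * energy L h a + (1 - t) * energy L h b"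
proof -
  have "energy L h (mix t a b) = (\<Sum>X\<in>L. (t * act h a X + (1 - t) * act h b X)\<^sup>2)"
    unfolding energy_def act_mix[OF assms(1,2)] unfolding mix_def ..
  also have "\<dots> \<le> (\<Sum>X\<in>L. t * (act h a X)\<^sup>2 + (1 - t) * (act h b X)\<^sup>2)"
    by (rule sum_mono) (rule square_convex_combination[OF assms(3,4)])
  also have "\<dots> = t * energy L h a + (1 - t) * energy L h b"
    unfolding energy_def by (simp add: sum.distrib sum_distrib_left)
  finally show ?thesis .
qed

definition orbit_sup :: "('m list set \<Rightarrow> real) \<Rightarrow> 'm list set set \<Rightarrow> 'm list \<Rightarrow> real"
  where "orbit_sup m L h = (SUP g\<in>carrier G. energy L h (act g m))"

lemma energy_le_orbit_sup:
  assumes "m \<in> topspace T" "admissible L h" "g \<in> carrier G"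
  shows "energy L h (act g m) \<le> orbit_sup m L h"
  unfolding orbit_sup_def
proof (rule cSUP_upper[OF assms(3)])
  show "bdd_above ((\<lambda>g. energy L h (act g m)) ` carrier G)"
    using energy_bounded[OF assms(2) act_T] assms(1) by (intro bdd_aboveI) auto
qed

lemma orbit_sup_mult_le:
  assumes m: "m \<in> topspace T" and Lh: "admissible L h" and g0: "g0 \<in> carrier G"
  shows "orbit_sup m L (h \<otimes>\<^bsub>G\<^esub> g0) \<le> orbit_sup m L h"
  unfolding orbit_sup_def
proof (rule cSUP_least)
  show "carrier G \<noteq> {}" using one_closed by blast
  fix g assume g: "g \<in> carrier G"
  have "energy L (h \<otimes>\<^bsub>G\<^esub> g0) (act g m) = energy L h (act (g0 \<otimes>\<^bsub>G\<^esub> g) m)"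
    using Lh g0 g m by (simp add: energy_act act_mult act_T admissible_def)
  also have "\<dots> \<le> orbit_sup m L h"
    by (rule energy_le_orbit_sup[OF m Lh mult_closed[OF g0 g]])
  finally show "energy L (h \<otimes>\<^bsub>G\<^esub> g0) (act g m) \<le> (SUP g\<in>carrier G. energy L h (act g m))"
    unfolding orbit_sup_def .
qed

definition dominated :: "('m list set \<Rightarrow> real) \<Rightarrow> ('m list set \<Rightarrow> real) set \<Rightarrow> ('m list set \<Rightarrow> real) set"
  where "dominated m Q = {q \<in> Q. \<forall>L h. admissible L h \<longrightarrow> energy L h q \<le> orbit_sup m L h}"

lemma dominated_closed:
  assumes "closedin T Q"
  shows "closedin T (dominated m Q)"
proof -
  let ?Z = "\<lambda>(L, h). {q \<in> topspace T. energy L h q \<in> {..orbit_sup m L h}}"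
  have "dominated m Q = Q \<inter> \<Inter>(?Z ` {(L, h). admissible L h})"
    unfolding dominated_def using closedin_subset[OF assms] by auto
  moreover have "closedin T (\<Inter>(?Z ` {(L, h). admissible L h}))"
  proof (rule closedin_Inter)
    show "?Z ` {(L, h). admissible L h} \<noteq> {}"
      using one_closed unfolding admissible_def by blast
    show "closedin T Y" if "Y \<in> ?Z ` {(L, h). admissible L h}" for Y
    proof -
      from that obtain L h where "admissible L h" "Y = ?Z (L, h)" by auto
      then show ?thesis
        using closedin_continuous_map_preimage[OF energy_continuous, of L h "{..orbit_sup m L h}"] by simp
    qed
  qed
  ultimately show ?thesis using assms by (simp add: closedin_Int)
qed

lemma dominated_convex:
  assumes Q: "convex_set Q" "Q \<subseteq> topspace T"
  shows "convex_set (dominated m Q)"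
  unfolding convex_set_def
proof (intro ballI allI impI)
  fix a b and t :: real assume ab: "a \<in> dominated m Q" "b \<in> dominated m Q" and t: "0 \<le> t \<and> t \<le> 1"
  then have abQ: "a \<in> Q" "b \<in> Q" unfolding dominated_def by auto
  have "energy L h (mix t a b) \<le> orbit_sup m L h" if "admissible L h" for L h
  proof -
    have "energy L h (mix t a b) \<le> t * energy L h a + (1 - t) * energy L h b"
      using energy_mix abQ Q(2) t by blast
    also have "\<dots> \<le> t * orbit_sup m L h + (1 - t) * orbit_sup m L h"
      using ab that t unfolding dominated_def by (intro add_mono mult_left_mono) auto
    finally show ?thesis by (simp add: algebra_simps)
  qed
  moreover have "mix t a b \<in> Q" using Q(1) abQ t unfolding convex_set_def by blast
  ultimately show "mix t a b \<in> dominated m Q" unfolding dominated_def by blast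
qed

lemma dominated_invariant:
  assumes m: "m \<in> topspace T" and Q: "invariant_set G act Q" "Q \<subseteq> topspace T"
  shows "invariant_set G act (dominated m Q)"
  unfolding invariant_set_def
proof (intro ballI)
  fix g0 q assume g0: "g0 \<in> carrier G" and q: "q \<in> dominated m Q"
  then have qQ: "q \<in> Q" unfolding dominated_def by auto
  have "energy L h (act g0 q) \<le> orbit_sup m L h" if Lh: "admissible L h" for L h
  proof -
    have hg0: "admissible L (h \<otimes>\<^bsub>G\<^esub> g0)"
      using Lh g0 mult_closed unfolding admissible_def by blast
    have "energy L h (act g0 q) = energy L (h \<otimes>\<^bsub>G\<^esub> g0) q"
      using Lh g0 qQ Q(2) energy_act unfolding admissible_def by blast
    also have "\<dots> \<le> orbit_sup m L (h \<otimes>\<^bsub>G\<^esub> g0)" using q hg0 unfolding dominated_def by blast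
    also have "\<dots> \<le> orbit_sup m L h" by (rule orbit_sup_mult_le[OF m Lh g0])
    finally show ?thesis .
  qed
  moreover have "act g0 q \<in> Q" using Q(1) g0 qQ unfolding invariant_set_def by blast
  ultimately show "act g0 q \<in> dominated m Q" unfolding dominated_def by blast
qed

lemma dominated_self:
  assumes "m \<in> Q" "Q \<subseteq> topspace T"
  shows "m \<in> dominated m Q"
proof -
  have "energy L h m \<le> orbit_sup m L h" if "admissible L h" for L h
    using energy_le_orbit_sup[OF _ that one_closed] act_one assms by auto
  then show ?thesis using assms(1) unfolding dominated_def by blast
qed

lemma minimal_convex_energy_bound:
  assumes Q: "minimal_convex_invariant Q" and m: "m \<in> Q" and "q \<in> Q" "admissible L h"
  shows "energy L h q \<le> orbit_sup m L h"
proof -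
  have QT: "Q \<subseteq> topspace T" and mT: "m \<in> topspace T"
    using minimal_convex_invariantD(5)[OF Q] m by auto
  have "closedin T (dominated m Q)"
    using dominated_closed minimal_convex_invariantD(1)[OF Q] by blast
  moreover have "dominated m Q \<noteq> {}" using dominated_self[OF m QT] by blast
  moreover have "convex_set (dominated m Q)"
    using dominated_convex[OF minimal_convex_invariantD(3)[OF Q] QT] .
  moreover have "invariant_set G act (dominated m Q)"
    using dominated_invariant[OF mT minimal_convex_invariantD(4)[OF Q] QT] .
  moreover have "dominated m Q \<subseteq> Q" unfolding dominated_def by blast
  ultimately have "dominated m Q = Q" by (rule minimal_convex_invariantD(6)[OF Q])
  then show ?thesis using assms(3,4) unfolding dominated_def by blast
qed
text \<open>Consequently, translates of two points of a minimal closed convex invariant set come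
arbitrarily close on any finite family of definable sets: choose a translate of their
midpoint whose energy nearly attains the orbit supremum; the corresponding translates of
the two points have energy at most this supremum, so by the parallelogram identity they
are close.\<close>

lemma minimal_convex_approximately_proximal:
  assumes Q: "minimal_convex_invariant Q" and x: "x \<in> Q" and y: "y \<in> Q"
    and L: "finite L" "L \<subseteq> D" and eps: "0 < \<epsilon>"
  shows "\<exists>g\<in>carrier G. \<forall>X\<in>L. \<bar>act g x X - act g y X\<bar> < \<epsilon>"
proof -
  have QT: "Q \<subseteq> topspace T" and Qcvx: "convex_set Q" and Qinv: "invariant_set G act Q"
    using Q closedin_subset unfolding minimal_convex_invariant_def by auto
  have adm: "admissible L \<one>\<^bsub>G\<^esub>" using L one_closed unfolding admissible_def by blast
  define m where "m = mix (1/2) x y"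
  have mQ: "m \<in> Q" using Qcvx x y unfolding convex_set_def m_def by auto
  define s where "s = orbit_sup m L \<one>\<^bsub>G\<^esub>"
  define \<delta> where "\<delta> = \<epsilon>\<^sup>2 / 4"
  have "s - \<delta> < s" using eps unfolding \<delta>_def by simp
  then obtain g where g: "g \<in> carrier G" "s - \<delta> < energy L \<one>\<^bsub>G\<^esub> (act g m)"
    using less_cSupD[of "(\<lambda>g. energy L \<one>\<^bsub>G\<^esub> (act g m)) ` carrier G" "s - \<delta>"] one_closed
    unfolding s_def orbit_sup_def by blast
  define a where "a = act g x"
  define b where "b = act g y"
  have aT: "a \<in> topspace T" and bT: "b \<in> topspace T" and aQ: "a \<in> Q" and bQ: "b \<in> Q"
    using act_T g(1) x y QT Qinv unfolding a_def b_def invariant_set_def by auto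
  have sa: "(\<Sum>X\<in>L. (a X)\<^sup>2) \<le> s"
    using minimal_convex_energy_bound[OF Q mQ aQ adm] energy_one[OF aT] unfolding s_def by simp
  have sb: "(\<Sum>X\<in>L. (b X)\<^sup>2) \<le> s"
    using minimal_convex_energy_bound[OF Q mQ bQ adm] energy_one[OF bT] unfolding s_def by simp
  have "act g m = mix (1/2) a b" unfolding m_def a_def b_def using x y QT by (intro act_mix) auto
  then have sm: "energy L \<one>\<^bsub>G\<^esub> (act g m) = (\<Sum>X\<in>L. ((a X + b X) / 2)\<^sup>2)"
    using energy_one[OF mix_T[OF aT bT, of "1/2"]] unfolding mix_def by (simp add: add_divide_distrib)
  have sum_lt: "(\<Sum>X\<in>L. ((a X - b X) / 2)\<^sup>2) < \<delta>"
    using sum_square_half_difference[of a b L] sa sb sm g(2) by (simp add: field_simps)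
  show ?thesis
  proof (intro bexI[OF _ g(1)] ballI)
    fix X assume "X \<in> L"
    then have "((a X - b X) / 2)\<^sup>2 \<le> (\<Sum>X\<in>L. ((a X - b X) / 2)\<^sup>2)"
      using L by (intro member_le_sum) auto
    then have "\<bar>(a X - b X) / 2\<bar>\<^sup>2 < (\<epsilon> / 2)\<^sup>2"
      using sum_lt unfolding \<delta>_def by (simp add: power_divide)
    then have "\<bar>(a X - b X) / 2\<bar> < \<epsilon> / 2"
      by (rule power2_less_imp_less) (use eps in simp)
    then show "\<bar>act g x X - act g y X\<bar> < \<epsilon>" unfolding a_def b_def by simp
  qed
qed

text \<open>Two limits of orbits agree if the orbits become arbitrarily close at every definable
set, since the evaluations are continuous and the space is extensional outside \<open>B_G(M)\<close>.\<close>

lemma limits_agree_if_close: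
  assumes l1: "limitin T f z1 F" and l2: "limitin T f' z2 F" and "F \<noteq> bot"
    and close: "\<And>X e. X \<in> D \<Longrightarrow> 0 < e \<Longrightarrow> eventually (\<lambda>g. \<bar>f g X - f' g X\<bar> < e) F"
  shows "z1 = z2"
proof
  fix X
  have z1: "z1 \<in> topspace T" and z2: "z2 \<in> topspace T" using l1 l2 limitin_topspace by metis+
  show "z1 X = z2 X"
  proof (cases "X \<in> D")
    case False
    then show ?thesis using T_undefined z1 z2 by metis
  next
    case True
    have "((\<lambda>g. f g X) \<longlongrightarrow> z1 X) F" "((\<lambda>g. f' g X) \<longlongrightarrow> z2 X) F"
      using continuous_map_limit[OF evaluation_continuous[OF True]] l1 l2 by (simp_all add: o_def)
    then have "((\<lambda>g. f g X - f' g X) \<longlongrightarrow> z1 X - z2 X) F" by (rule tendsto_diff)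
    moreover have "((\<lambda>g. f g X - f' g X) \<longlongrightarrow> 0) F"
      unfolding tendsto_iff dist_real_def using close[OF True] by simp
    ultimately have "z1 X - z2 X = 0" using tendsto_unique[OF \<open>F \<noteq> bot\<close>] by blast
    then show ?thesis by simp
  qed
qed

text \<open>If the orbits of \<open>x\<close> and \<open>y\<close> come arbitrarily close on every finite family of
definable sets, then \<open>x\<close> and \<open>y\<close> are proximal: along the filter generated by these
approximation sets the pair of orbits has, by compactness, a convergent refinement, and
the two limits agree.\<close>

lemma proximal_pair_if_approximately_proximal:
  assumes xT: "x \<in> topspace T" and yT: "y \<in> topspace T"
    and approx: "\<And>L \<epsilon>. finite L \<Longrightarrow> L \<subseteq> D \<Longrightarrow> 0 < \<epsilon> \<Longrightarrow>
                   \<exists>g\<in>carrier G. \<forall>X\<in>L. \<bar>act g x X - act g y X\<bar> < \<epsilon>"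
  shows "proximal_pair G T act x y"
proof -
  define B where "B = {(L, \<epsilon>::real). finite L \<and> L \<subseteq> D \<and> 0 < \<epsilon>}"
  define U where "U = (\<lambda>(L, \<epsilon>::real). {g \<in> carrier G. \<forall>X\<in>L. \<bar>act g x X - act g y X\<bar> < \<epsilon>})"
  define F where "F = (INF b\<in>B. principal (U b))"
  have B_single: "({X}, e) \<in> B" if "X \<in> D" "0 < e" for X e using that unfolding B_def by simp
  have B_empty: "({}, 1) \<in> B" unfolding B_def by simp
  have Bne: "B \<noteq> {}" using B_empty by blast
  have dir: "\<exists>c\<in>B. U c \<subseteq> U a \<inter> U b" if "a \<in> B" "b \<in> B" for a b
  proof -
    obtain L1 e1 L2 e2 where ab: "a = (L1, e1)" "b = (L2, e2)" by fastforce
    have "(L1 \<union> L2, min e1 e2) \<in> B" using that unfolding ab B_def by simp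
    moreover have "U (L1 \<union> L2, min e1 e2) \<subseteq> U a \<inter> U b" unfolding ab U_def by auto
    ultimately show ?thesis by blast
  qed
  have ev: "eventually P F \<longleftrightarrow> (\<exists>b\<in>B. \<forall>g\<in>U b. P g)" for P
    unfolding F_def by (rule eventually_INF_principal_directed[OF Bne dir])
  have ne: "U b \<noteq> {}" if "b \<in> B" for b
  proof -
    obtain L e where b: "b = (L, e)" by fastforce
    then have "finite L" "L \<subseteq> D" "0 < e" using that unfolding B_def by simp_all
    then show ?thesis using approx unfolding b U_def by blast
  qed
  have "F \<noteq> bot" unfolding F_def by (rule INF_principal_directed_neq_bot[OF Bne dir ne])
  have evG: "eventually (\<lambda>g. g \<in> carrier G) F"
    unfolding ev using B_empty unfolding U_def by blast
  have close: "eventually (\<lambda>g. \<bar>act g x X - act g y X\<bar> < e) F" if "X \<in> D" "0 < e" for X e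
    unfolding ev using B_single[OF that] unfolding U_def by blast
  have ev_T: "eventually (\<lambda>g. (act g x, act g y) \<in> topspace (prod_topology T T)) F"
    using evG by (rule eventually_mono) (simp add: act_T xT yT)
  have "compact_space (prod_topology T T)"
    using compact_T by (simp add: compact_space_prod_topology)
  then obtain F' z where F': "F' \<noteq> bot" "F' \<le> F"
    and lim: "limitin (prod_topology T T) (\<lambda>g. (act g x, act g y)) z F'"
    using compact_space_convergent_refinement[OF _ \<open>F \<noteq> bot\<close> ev_T] by blast
  have l1: "limitin T (\<lambda>g. act g x) (fst z) F'" and l2: "limitin T (\<lambda>g. act g y) (snd z) F'"
    using lim unfolding limitin_pairwise by (simp_all add: o_def)
  have "fst z = snd z"
    using limits_agree_if_close[OF l1 l2 F'(1)] filter_leD[OF F'(2) close] by blast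
  then show ?thesis
    unfolding proximal_pair_def using F'(1) filter_leD[OF F'(2) evG] l1 l2 by metis
qed

lemma minimal_convex_proximal:
  assumes "minimal_convex_invariant Q" "x \<in> Q" "y \<in> Q"
  shows "proximal_pair G T act x y"
proof (rule proximal_pair_if_approximately_proximal)
  have "Q \<subseteq> topspace T" using assms(1) closedin_subset unfolding minimal_convex_invariant_def by metis
  then show "x \<in> topspace T" "y \<in> topspace T" using assms(2,3) by auto
qed (rule minimal_convex_approximately_proximal[OF assms])

subsection \<open>Coding Keisler measures by sets of definable sets\<close>

text \<open>Strong amenability only speaks about flows on spaces of sets of definable sets, so we
code a measure \<open>\<mu>\<close> by the sets \<open>A \<union> {c\<^sub>n}\<close>, where \<open>A\<close> is definable and \<open>\<mu>(A)\<close> exceeds the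
\<open>n\<close>-th rational, and \<open>c\<^sub>n\<close> is a constant tuple of length \<open>k + 1 + n\<close>.\<close>

lemma tagged_set_inj:
  assumes "\<forall>x\<in>A. length x = k" "\<forall>x\<in>A'. length x = k"
    and eq: "A \<union> {replicate (k + 1 + n) c} = A' \<union> {replicate (k + 1 + n') c}"
  shows "A = A' \<and> n = n'"
proof -
  have untag: "{x \<in> B \<union> {r}. length x = k} = B" if "\<forall>x\<in>B. length x = k" "length r \<noteq> k"
    for B and r :: "'a list"
    using that by auto
  have tag_length: "length (replicate (k + 1 + m) c) \<noteq> k" for m by simp
  have "A = A'"
    using untag[OF assms(1) tag_length] untag[OF assms(2) tag_length] eq by metis
  moreover have "replicate (k + 1 + n) c \<notin> A'" using assms(2) tag_length by blast
  then have "replicate (k + 1 + n) c = replicate (k + 1 + n') c" using eq by blast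
  then have "n = n'" by (metis add_left_cancel length_replicate)
  ultimately show ?thesis by simp
qed

lemma D_length: "A \<in> D \<Longrightarrow> \<forall>x\<in>A. length x = k"
proof -
  assume A: "A \<in> D"
  have "carrier G \<in> S k" using dg unfolding definable_group_def by auto
  moreover have "S k \<subseteq> Pow {x. length x = k}" using fo unfolding fo_structure_def by auto
  moreover have "A \<subseteq> carrier G" using A unfolding defsubG_def by auto
  ultimately show ?thesis by auto
qed

definition code :: "('m list set \<Rightarrow> real) \<Rightarrow> 'm list set set"
  where "code \<mu> = {A \<union> {replicate (k + 1 + n) undefined} | A n. A \<in> D \<and> real_of_rat (from_nat n) < \<mu> A}"

lemma code_inj: "inj_on code (topspace T)"
proof (rule inj_onI)
  have lt_impossible: False
    if eq: "code a = code b" and A: "A \<in> D" and lt: "a A < b A" for a b A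
  proof -
    obtain q where q: "a A < real_of_rat q" "real_of_rat q < b A" using of_rat_dense[OF lt] by blast
    have "real_of_rat (from_nat (to_nat q)) < b A" using q(2) by simp
    then have "A \<union> {replicate (k + 1 + to_nat q) undefined} \<in> code b"
      unfolding code_def using A by blast
    then have "A \<union> {replicate (k + 1 + to_nat q) undefined} \<in> code a" using eq by simp
    then obtain A' n' where A': "A' \<in> D" "real_of_rat (from_nat n') < a A'"
      "A \<union> {replicate (k + 1 + to_nat q) undefined} = A' \<union> {replicate (k + 1 + n') undefined}"
      unfolding code_def by blast
    then have "A = A' \<and> to_nat q = n'" using tagged_set_inj[OF D_length[OF A] D_length[OF A'(1)]] by blast
    then show False using A'(2) q(1) by auto
  qed
  fix a b assume a: "a \<in> topspace T" and b: "b \<in> topspace T" and eq: "code a = code b"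
  show "a = b"
  proof
    fix A show "a A = b A"
    proof (cases "A \<in> D")
      case False then show ?thesis using T_undefined a b by metis
    next
      case True
      then show ?thesis using lt_impossible[OF eq True] lt_impossible[OF eq[symmetric] True]
        by (cases "a A" "b A" rule: linorder_cases) auto
    qed
  qed
qed

text \<open>Under definable strong amenability, a minimal closed invariant set whose points are
pairwise proximal is a single point: it carries a minimal definable proximal subflow, whose
coded copy must be trivial.\<close>

lemma minimal_proximal_subset_singleton:
  assumes sa: "def_strongly_amenable S k G"
    and X: "closedin T X" "X \<noteq> {}" "invariant_set G act X"
    and min: "\<And>Y. closedin T Y \<Longrightarrow> Y \<noteq> {} \<Longrightarrow> Y \<subseteq> X \<Longrightarrow> invariant_set G act Y \<Longrightarrow> Y = X"
    and prox: "\<And>x y. x \<in> X \<Longrightarrow> y \<in> X \<Longrightarrow> proximal_pair G T act x y"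
  shows "\<exists>\<mu>. X = {\<mu>}"
proof -
  have XT: "X \<subseteq> topspace T" using X(1) closedin_subset by metis
  then have topX: "topspace (subtopology T X) = X" by (rule topspace_subtopology_subset)
  have inj: "inj_on code (topspace (subtopology T X))"
    using inj_on_subset[OF code_inj XT] topX by simp
  have "\<exists>(T' :: 'm list set set topology) act'. definable_flow S k G T' act' \<and>
      minimal_flow G T' act' \<and> proximal_flow G T' act' \<and> topspace T' = code ` topspace (subtopology T X)"
    by (rule minimal_proximal_flow_copy[OF inj definable_flow_subtopology[OF df X(1,3)]
          minimal_flow_subtopology[OF X(1,2) min] proximal_flow_subtopology[OF X(1,3) prox]])
  then obtain T' :: "'m list set set topology" and act'
    where T': "definable_flow S k G T' act'" "minimal_flow G T' act'" "proximal_flow G T' act'"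
      and top': "topspace T' = code ` X"
    unfolding topX by (elim exE conjE)
  obtain a where "topspace T' = {a}"
    using sa[unfolded def_strongly_amenable_def, rule_format, of T' act'] T' by blast
  then have code_X: "code ` X = {a}" using top' by simp
  obtain \<mu> where \<mu>: "\<mu> \<in> X" using X(2) by blast
  have "\<nu> = \<mu>" if "\<nu> \<in> X" for \<nu>
    using inj_onD[OF code_inj _ subsetD[OF XT that] subsetD[OF XT \<mu>]] code_X that \<mu> by blast
  then show ?thesis using \<mu> by blast
qed

end

theorem mainTheorem16:
  fixes S :: "nat \<Rightarrow> 'm list set set" and k :: nat and G :: "'m list monoid"
  assumes "fo_structure S"
    and "definable_group S k G"
    and "all_types_definable S k G"
    and "definable_flow S k G (KM_top S k G) (KM_act S k G)"
    and "def_strongly_amenable S k G"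
  shows "def_amenable S k G"
proof -
  interpret keisler_flow S k G using assms(1,2,4) by unfold_locales
  obtain Q where Q: "minimal_convex_invariant Q" using minimal_convex_invariant_exists by blast
  obtain X where X: "closedin T X" "X \<noteq> {}" "X \<subseteq> Q" "invariant_set G act X"
    and min: "\<forall>Y. closedin T Y \<and> Y \<noteq> {} \<and> Y \<subseteq> X \<and> invariant_set G act Y \<longrightarrow> Y = X"
    using minimal_invariant_subset_exists[OF minimal_convex_invariantD(1,2,4)[OF Q]] by (elim exE conjE)
  have min': "Y = X" if "closedin T Y" "Y \<noteq> {}" "Y \<subseteq> X" "invariant_set G act Y" for Y
    using that by (rule min[rule_format, OF conjI, OF _ conjI, OF _ _ conjI])
  have prox: "proximal_pair G T act x y" if "x \<in> X" "y \<in> X" for x y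
    using minimal_convex_proximal[OF Q] X(3) that by blast
  obtain \<mu> where \<mu>: "X = {\<mu>}"
    using minimal_proximal_subset_singleton[OF assms(5) X(1,2,4) min' prox] by blast
  then have "\<mu> \<in> topspace T" using closedin_subset[OF X(1)] by blast
  then have "keisler S k G \<mu>" by (rule T_keisler)
  moreover have "act g \<mu> = \<mu>" if "g \<in> carrier G" for g
  proof -
    have "act g \<mu> \<in> X" using X(4) that unfolding \<mu> invariant_set_def by blast
    then show ?thesis unfolding \<mu> by simp
  qed
  ultimately show ?thesis unfolding def_amenable_def by blast
qed

end
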